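(* Let $N\ge1$. There is a constant $C>0$ such that for every $f\in L^\infty(0,1;\mathbb{R}^N)$ there exists a sequence $(f^k)_{k\ge1}\subset\mathcal{F}^N_{(0,1)}$ with $$\lim_{k\to\infty}\int_0^1 f^k(t)\cdot h(t)\,dt=\int_0^1 f(t)\cdot h(t)\,dt\quad\forall h\in L^1(0,1;\mathbb{R}^N),$$ and $\|f^k\|_{L^\infty(0,1;\mathbb{R}^N)}\le C\|f\|_{L^\infty(0,1;\mathbb{R}^N)}$ for all $k$. In particular $\mathcal{F}^N_{(0,1)}$ is weak-$*$ dense in $L^\infty(0,1;\mathbb{R}^N)$.
   Context: $\mathcal{F}^N_{(a,b)}\subset L^\infty(a,b;\mathbb{R}^N)$ is the set of piecewise constant functions with at most one nonzero component on each piece: $f\in\mathcal{F}^N_{(a,b)}$ iff there exist $p\in\mathbb{N}$, indices $i_1,\dots,i_p\in\{1,\dots,N\}$, constants $c_1,\dots,c_p\in\mathbb{R}$ and $a=t_0<t_1<\cdots<t_p=b$ with $f(t)=c_l e_{i_l}$ for $t\in(t_{l-1},t_l)$, $l=1,\dots,p$, where $e_1,\dots,e_N$ is the standard basis of $\mathbb{R}^N$. *)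

theory Defs
  imports "HOL-Analysis.Analysis" "HOL-Probability.Essential_Supremum"
begin

text \<open>Functions on (0,1) with values in R^N, N = CARD('n); measure: Lebesgue on [0,1].\<close>

definition Linf_norm :: "(real \<Rightarrow> real ^ 'n) \<Rightarrow> ereal" where
  "Linf_norm f = esssup (lebesgue_on {0..1}) (\<lambda>t. ereal (norm (f t)))"

definition Linf :: "(real \<Rightarrow> real ^ 'n) set" where
  "Linf = {f. f \<in> borel_measurable (lebesgue_on {0..1}) \<and> Linf_norm f < \<infinity>}"

definition L1 :: "(real \<Rightarrow> real ^ 'n) set" where
  "L1 = {h. integrable (lebesgue_on {0..1}) h}"

definition F_N :: "real \<Rightarrow> real \<Rightarrow> (real \<Rightarrow> real ^ 'n) set" where
  "F_N a b = {f. \<exists>(p::nat) (i::nat \<Rightarrow> 'n) (c::nat \<Rightarrow> real) (t::nat \<Rightarrow> real).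
      1 \<le> p \<and> t 0 = a \<and> t p = b \<and> (\<forall>l<p. t l < t (Suc l)) \<and>
      (\<forall>l\<in>{1..p}. \<forall>s\<in>{t (l - 1)<..<t l}. f s = c l *\<^sub>R axis (i l) 1)}"

end

theory Submission
  imports Defs
begin

text \<open>Split [0,1] into n blocks of length 1/n and each block into N = CARD('n) equal
  subintervals. On the r-th subinterval of a block, the approximant points in the r-th coordinate
  direction and its value is chosen so that it has the same integral over the block as the r-th
  component of f; so it lies in F_N, has sup norm at most N times that of f, and f_n - f is
  orthogonal to every function that is constant on the blocks. Uniform continuity then gives
  \<integral>(f_n - f)\<bullet>g \<rightarrow> 0 for continuous g, and since f_n - f is uniformly bounded and continuous
  functions are dense in L^1, the convergence holds against every h \<in> L^1.\<close>

lemma AE_norm_inner_le: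
  fixes D q :: "'a \<Rightarrow> 'b::real_inner"
  assumes "AE t in M. norm (D t) \<le> K"
  shows "AE t in M. norm (D t \<bullet> q t) \<le> K * norm (q t)"
  using assms
proof eventually_elim
  case (elim t)
  have "norm (D t \<bullet> q t) \<le> norm (D t) * norm (q t)"
    by (simp add: Cauchy_Schwarz_ineq2)
  also have "\<dots> \<le> K * norm (q t)"
    using elim by (simp add: mult_right_mono)
  finally show ?case .
qed

lemma integrable_inner_bounded:
  fixes D q :: "'a \<Rightarrow> 'b::euclidean_space"
  assumes "D \<in> borel_measurable M" "AE t in M. norm (D t) \<le> K" "integrable M q"
  shows "integrable M (\<lambda>t. D t \<bullet> q t)"
proof (rule Bochner_Integration.integrable_bound)
  show "integrable M (\<lambda>t. K * norm (q t))"
    using assms(3) by auto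
  show "(\<lambda>t. D t \<bullet> q t) \<in> borel_measurable M"
    using assms(1,3) borel_measurable_integrable by measurable
  show "AE t in M. norm (D t \<bullet> q t) \<le> norm (K * norm (q t))"
    using AE_norm_inner_le[OF assms(2), of q] by eventually_elim auto
qed

lemma abs_integral_inner_le:
  fixes D q :: "'a \<Rightarrow> 'b::euclidean_space"
  assumes "D \<in> borel_measurable M" "AE t in M. norm (D t) \<le> K" "integrable M q"
  shows "\<bar>\<integral>t. D t \<bullet> q t \<partial>M\<bar> \<le> K * (\<integral>t. norm (q t) \<partial>M)"
proof -
  have "\<bar>\<integral>t. D t \<bullet> q t \<partial>M\<bar> \<le> (\<integral>t. norm (D t \<bullet> q t) \<partial>M)"
    using integral_norm_bound[of M "\<lambda>t. D t \<bullet> q t"] by simp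
  also have "\<dots> \<le> (\<integral>t. K * norm (q t) \<partial>M)"
    using integrable_inner_bounded[OF assms] assms(3) AE_norm_inner_le[OF assms(2), of q]
    by (intro integral_mono_AE) auto
  finally show ?thesis
    by simp
qed

lemma integral_inner_bounded_add:
  fixes D q r :: "'a \<Rightarrow> 'b::euclidean_space"
  assumes "D \<in> borel_measurable M" "AE t in M. norm (D t) \<le> K" "integrable M q" "integrable M r"
  shows "(\<integral>t. D t \<bullet> (q t + r t) \<partial>M) = (\<integral>t. D t \<bullet> q t \<partial>M) + (\<integral>t. D t \<bullet> r t \<partial>M)"
  unfolding inner_add_right
  by (intro Bochner_Integration.integral_add integrable_inner_bounded[OF assms(1,2)] assms(3,4))

lemma tendsto_integral_inner_zero_approx:
  fixes D :: "nat \<Rightarrow> 'a \<Rightarrow> 'b::euclidean_space"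
  assumes D: "\<And>k. D k \<in> borel_measurable M" "\<And>k. AE t in M. norm (D k t) \<le> K"
    and h: "integrable M h"
    and approx: "\<And>e. e > 0 \<Longrightarrow> \<exists>g. integrable M g \<and>
        (\<lambda>k. \<integral>t. D k t \<bullet> g t \<partial>M) \<longlonglongrightarrow> 0 \<and> (\<integral>t. norm (h t - g t) \<partial>M) < e"
  shows "(\<lambda>k. \<integral>t. D k t \<bullet> h t \<partial>M) \<longlonglongrightarrow> 0"
proof (rule LIMSEQ_I)
  fix e :: real assume e: "0 < e"
  define K' where "K' = \<bar>K\<bar> + 1"
  have K': "K' > 0"
    by (simp add: K'_def add_nonneg_pos)
  have DK': "AE t in M. norm (D k t) \<le> K'" for k
    using D(2)[of k] by eventually_elim (auto simp: K'_def)
  obtain g where g: "integrable M g" "(\<lambda>k. \<integral>t. D k t \<bullet> g t \<partial>M) \<longlonglongrightarrow> 0"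
      "(\<integral>t. norm (h t - g t) \<partial>M) < e / (2 * K')"
    using approx[of "e / (2 * K')"] e K' by auto
  obtain k0 where k0: "\<And>k. k \<ge> k0 \<Longrightarrow> norm ((\<integral>t. D k t \<bullet> g t \<partial>M) - 0) < e / 2"
    using LIMSEQ_D[OF g(2), of "e / 2"] e by auto
  have hg: "integrable M (\<lambda>t. h t - g t)"
    using h g(1) by auto
  have "\<bar>\<integral>t. D k t \<bullet> h t \<partial>M\<bar> < e" if "k \<ge> k0" for k
  proof -
    have "(\<integral>t. D k t \<bullet> h t \<partial>M) = (\<integral>t. D k t \<bullet> g t \<partial>M) + (\<integral>t. D k t \<bullet> (h t - g t) \<partial>M)"
      using integral_inner_bounded_add[OF D(1) DK' g(1) hg] by simp
    moreover have "\<bar>\<integral>t. D k t \<bullet> (h t - g t) \<partial>M\<bar> \<le> K' * (\<integral>t. norm (h t - g t) \<partial>M)"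
      by (rule abs_integral_inner_le[OF D(1) DK' hg])
    moreover have "K' * (\<integral>t. norm (h t - g t) \<partial>M) < e / 2"
      using mult_strict_left_mono[OF g(3) K'] K' by simp
    ultimately show ?thesis
      using k0[OF that] by simp
  qed
  then show "\<exists>k0. \<forall>k\<ge>k0. norm ((\<integral>t. D k t \<bullet> h t \<partial>M) - 0) < e"
    by auto
qed

lemma L1_approx_indicator_continuous:
  fixes A S :: "'a::euclidean_space set"
  assumes S: "S \<in> lmeasurable" and A: "A \<in> sets (lebesgue_on S)" and e: "e > 0"
  obtains \<phi> :: "'a \<Rightarrow> real"
  where "continuous_on UNIV \<phi>" "(\<integral>t. \<bar>indicator A t - \<phi> t\<bar> \<partial>lebesgue_on S) < e"
proof -
  have A_lebesgue: "A \<in> sets lebesgue"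
    using A S by (auto simp: sets_restrict_space_iff)
  have fin: "finite_measure (lebesgue_on S)"
    using S by (rule finite_measure_lebesgue_on)
  obtain T where T: "closed T" "T \<subseteq> A" "A - T \<in> lmeasurable" "emeasure lebesgue (A - T) < ennreal (e/2)"
    using sets_lebesgue_inner_closed[OF A_lebesgue, of "e/2"] e by auto
  obtain U where U: "open U" "A \<subseteq> U" "U - A \<in> lmeasurable" "emeasure lebesgue (U - A) < ennreal (e/2)"
    using sets_lebesgue_outer_open[OF A_lebesgue, of "e/2"] e by auto
  obtain \<phi> :: "'a \<Rightarrow> real" where \<phi>: "continuous_on UNIV \<phi>"
    "\<And>x. \<phi> x \<in> closed_segment 1 0" "\<And>x. x \<in> T \<Longrightarrow> \<phi> x = 1" "\<And>x. x \<in> -U \<Longrightarrow> \<phi> x = 0"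
    using Urysohn[OF T(1), of "-U" 1 0] U(1) T(2) U(2) by auto
  have \<phi>01: "0 \<le> \<phi> x \<and> \<phi> x \<le> 1" for x
    using \<phi>(2)[of x] by (auto simp: closed_segment_eq_real_ivl)
  \<comment> \<open>The integrand vanishes on T and off U, so it is supported in the small set U - T.\<close>
  define W where "W = (U - T) \<inter> S"
  have UT: "U - T = (U - A) \<union> (A - T)"
    using T(2) U(2) by auto
  have UT_lmeasurable: "U - T \<in> lmeasurable"
    unfolding UT using T(3) U(3) by auto
  have W: "W \<in> sets lebesgue" "W \<subseteq> S"
    unfolding W_def using UT_lmeasurable S by auto
  have W_sets: "W \<in> sets (lebesgue_on S)"
    using W S by (simp add: sets_restrict_space_iff)
  have le_W: "\<bar>indicator A t - \<phi> t\<bar> \<le> indicator W t" if "t \<in> space (lebesgue_on S)" for t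
    using that \<phi>(3,4)[of t] \<phi>01[of t] T(2) U(2)
    by (cases "t \<in> T"; cases "t \<in> U") (auto simp: W_def indicator_def)
  have "(\<integral>t. \<bar>indicator A t - \<phi> t\<bar> \<partial>lebesgue_on S) \<le> (\<integral>t. indicator W t \<partial>lebesgue_on S)"
  proof (rule integral_mono[OF _ _ le_W])
    have "\<phi> \<in> borel_measurable (lebesgue_on S)"
      using \<phi>(1) S by (intro continuous_imp_measurable_on_sets_lebesgue continuous_on_subset[OF \<phi>(1)]) auto
    then show "integrable (lebesgue_on S) (\<lambda>t. \<bar>indicator A t - \<phi> t\<bar>)"
      using \<phi>01 A by (intro finite_measure.integrable_const_bound[OF fin, where B=1] AE_I2)
        (auto simp: indicator_def)
    show "integrable (lebesgue_on S) (indicator W :: 'a \<Rightarrow> real)"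
      using W_sets by (intro finite_measure.integrable_const_bound[OF fin, where B=1] AE_I2) auto
  qed
  also have "\<dots> = measure lebesgue W"
    using W S W_sets by (simp add: measure_restrict_space Int_absorb2)
  also have "\<dots> \<le> measure lebesgue (U - A) + measure lebesgue (A - T)"
    using W UT_lmeasurable T(3) U(3) unfolding UT W_def
    by (intro order.trans[OF measure_mono_fmeasurable measure_Un_le]) auto
  also have "\<dots> < e/2 + e/2"
    using T(3,4) U(3,4) e by (intro add_strict_mono) (simp_all add: emeasure_eq_measure2 ennreal_less_iff)
  finally show ?thesis
    using \<phi>(1) that by simp
qed

lemma L1_approx_indicator_scaleR_continuous:
  fixes A S :: "'a::euclidean_space set" and c :: "'b::real_normed_vector"
  assumes S: "S \<in> lmeasurable" and A: "A \<in> sets (lebesgue_on S)" and e: "e > 0"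
  obtains g where "continuous_on UNIV g"
    "(\<integral>t. norm (indicator A t *\<^sub>R c - g t) \<partial>lebesgue_on S) < e"
proof -
  have "e / (norm c + 1) > 0"
    using e by (simp add: add_nonneg_pos)
  then obtain \<phi> :: "'a \<Rightarrow> real" where \<phi>: "continuous_on UNIV \<phi>"
      "(\<integral>t. \<bar>indicator A t - \<phi> t\<bar> \<partial>lebesgue_on S) < e / (norm c + 1)"
    using L1_approx_indicator_continuous[OF S A] by blast
  have "(\<integral>t. norm (indicator A t *\<^sub>R c - \<phi> t *\<^sub>R c) \<partial>lebesgue_on S)
      = (\<integral>t. \<bar>indicator A t - \<phi> t\<bar> \<partial>lebesgue_on S) * norm c"
    by (simp add: scaleR_diff_left[symmetric])
  also have "\<dots> \<le> e / (norm c + 1) * norm c"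
    using \<phi>(2) by (intro mult_right_mono) auto
  also have "\<dots> < e"
    using e norm_ge_zero[of c] by (simp add: divide_less_eq add_pos_nonneg not_less)
  finally have "(\<integral>t. norm (indicator A t *\<^sub>R c - \<phi> t *\<^sub>R c) \<partial>lebesgue_on S) < e" .
  moreover have "continuous_on UNIV (\<lambda>t. \<phi> t *\<^sub>R c)"
    using \<phi>(1) by (intro continuous_intros)
  ultimately show ?thesis
    by (intro that[of "\<lambda>t. \<phi> t *\<^sub>R c"]) simp_all
qed

lemma tendsto_integral_norm_diff_dominated:
  fixes f :: "'a \<Rightarrow> 'b::{banach, second_countable_topology}"
  assumes f: "integrable M f" and s: "\<And>i. s i \<in> borel_measurable M"
    and lim: "\<And>x. x \<in> space M \<Longrightarrow> (\<lambda>i. s i x) \<longlonglongrightarrow> f x"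
    and bound: "\<And>i x. x \<in> space M \<Longrightarrow> norm (s i x) \<le> 2 * norm (f x)"
  shows "(\<lambda>i. \<integral>x. norm (f x - s i x) \<partial>M) \<longlonglongrightarrow> 0"
proof -
  have "(\<lambda>i. \<integral>x. norm (f x - s i x) \<partial>M) \<longlonglongrightarrow> (\<integral>x. 0 \<partial>M)"
  proof (rule integral_dominated_convergence[where w="\<lambda>x. 3 * norm (f x)"])
    show "(\<lambda>x. norm (f x - s i x)) \<in> borel_measurable M" for i
      using s[of i] f borel_measurable_integrable by measurable
    show "AE x in M. (\<lambda>i. norm (f x - s i x)) \<longlonglongrightarrow> 0"
    proof (rule AE_I2)
      fix x assume "x \<in> space M"
      then have "(\<lambda>i. f x - s i x) \<longlonglongrightarrow> f x - f x"
        by (intro tendsto_diff tendsto_const lim)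
      then show "(\<lambda>i. norm (f x - s i x)) \<longlonglongrightarrow> 0"
        using tendsto_norm_zero by fastforce
    qed
    show "AE x in M. norm (norm (f x - s i x)) \<le> 3 * norm (f x)" for i
    proof (rule AE_I2)
      fix x assume "x \<in> space M"
      then show "norm (norm (f x - s i x)) \<le> 3 * norm (f x)"
        using bound[of x i] norm_triangle_ineq4[of "f x" "s i x"] by simp
    qed
  qed (use f in auto)
  then show ?thesis
    by simp
qed

lemma tendsto_integral_inner_zero_of_continuous:
  fixes D :: "nat \<Rightarrow> real \<Rightarrow> 'b::euclidean_space"
  assumes D: "\<And>k. D k \<in> borel_measurable (lebesgue_on {a..b})"
      "\<And>k. AE t in lebesgue_on {a..b}. norm (D k t) \<le> K"
    and cont: "\<And>g. continuous_on {a..b} g \<Longrightarrow>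
      (\<lambda>k. \<integral>t. D k t \<bullet> g t \<partial>lebesgue_on {a..b}) \<longlonglongrightarrow> 0"
    and h: "integrable (lebesgue_on {a..b}) h"
  shows "(\<lambda>k. \<integral>t. D k t \<bullet> h t \<partial>lebesgue_on {a..b}) \<longlonglongrightarrow> 0"
  using h
proof (induct rule: integrable_induct)
  case (base A c)
  have fin: "finite_measure (lebesgue_on {a..b::real})"
    by (rule finite_measure_lebesgue_on) auto
  show ?case
  proof (rule tendsto_integral_inner_zero_approx[OF D])
    show "integrable (lebesgue_on {a..b}) (\<lambda>t. indicator A t *\<^sub>R c)"
      using base by (intro integrable_mult_indicator finite_measure.integrable_const[OF fin]) auto
    fix e :: real assume e: "e > 0"
    have "{a..b} \<in> lmeasurable"
      by (metis lmeasurable_cbox interval_cbox)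
    then obtain g where g: "continuous_on UNIV g"
        "(\<integral>t. norm (indicator A t *\<^sub>R c - g t) \<partial>lebesgue_on {a..b}) < e"
      by (rule L1_approx_indicator_scaleR_continuous[OF _ base(1) e])
    have g_ab: "continuous_on {a..b} g"
      using g(1) by (rule continuous_on_subset) simp
    show "\<exists>g. integrable (lebesgue_on {a..b}) g \<and>
        (\<lambda>k. \<integral>t. D k t \<bullet> g t \<partial>lebesgue_on {a..b}) \<longlonglongrightarrow> 0 \<and>
        (\<integral>t. norm (indicator A t *\<^sub>R c - g t) \<partial>lebesgue_on {a..b}) < e"
      using g(2) cont[OF g_ab] continuous_imp_integrable_real[OF g_ab] by blast
  qed
next
  case (add f g)
  then show ?case
    using tendsto_add[OF add(2) add(4)] integral_inner_bounded_add[OF D add(1) add(3)] by simp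
next
  case (lim f s)
  show ?case
  proof (rule tendsto_integral_inner_zero_approx[OF D lim(5)])
    fix e :: real assume e: "e > 0"
    have "(\<lambda>i. \<integral>t. norm (f t - s i t) \<partial>lebesgue_on {a..b}) \<longlonglongrightarrow> 0"
      using lim(5) borel_measurable_integrable[OF lim(1)] lim(3,4)
      by (rule tendsto_integral_norm_diff_dominated)
    then obtain i where "norm ((\<integral>t. norm (f t - s i t) \<partial>lebesgue_on {a..b}) - 0) < e"
      using LIMSEQ_D[OF _ e] by blast
    then show "\<exists>g. integrable (lebesgue_on {a..b}) g \<and>
        (\<lambda>k. \<integral>t. D k t \<bullet> g t \<partial>lebesgue_on {a..b}) \<longlonglongrightarrow> 0 \<and>
        (\<integral>t. norm (f t - g t) \<partial>lebesgue_on {a..b}) < e"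
      using lim(1,2)[of i] by auto
  qed
qed

abbreviation lebesgue01 :: "real measure" where
  "lebesgue01 \<equiv> lebesgue_on {0..1}"

lemma finite_measure_lebesgue01: "finite_measure lebesgue01"
  by (rule finite_measure_lebesgue_on) auto

definition block :: "nat \<Rightarrow> nat \<Rightarrow> real set" where
  "block n j = {real j / real n ..< (real j + 1) / real n}"

lemma mem_block_iff: "0 < n \<Longrightarrow> t \<in> block n j \<longleftrightarrow> \<lfloor>t * real n\<rfloor> = int j"
  by (auto simp: block_def floor_eq_iff field_simps)

lemma mem_block_unique: "0 < n \<Longrightarrow> t \<in> block n j \<Longrightarrow> t \<in> block n j' \<longleftrightarrow> j' = j"
  by (auto simp: mem_block_iff)

lemma mem_block_floor:
  assumes "0 < n" "t \<in> {0..<1}"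
  shows "nat \<lfloor>t * real n\<rfloor> < n" "t \<in> block n (nat \<lfloor>t * real n\<rfloor>)"
proof -
  have "0 \<le> \<lfloor>t * real n\<rfloor>" "\<lfloor>t * real n\<rfloor> < int n"
    using assms by (auto simp: floor_less_iff)
  then show "nat \<lfloor>t * real n\<rfloor> < n" "t \<in> block n (nat \<lfloor>t * real n\<rfloor>)"
    using assms(1) by (auto simp: mem_block_iff)
qed

lemma block_subset: "j < n \<Longrightarrow> block n j \<subseteq> {0..<1}"
proof
  fix t assume j: "j < n" and t: "t \<in> block n j"
  have "real j / real n \<le> t" "t < (real j + 1) / real n"
    using t by (auto simp: block_def)
  moreover have "(real j + 1) / real n \<le> 1"
    using j by simp
  ultimately show "t \<in> {0..<1}"
    by (auto intro: order.trans[rotated])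
qed

lemma mem_block_mult_iff:
  assumes "0 < n" "0 < N" "t \<in> block (n * N) m"
  shows "t \<in> block n j \<longleftrightarrow> m div N = j"
proof -
  have "\<lfloor>t * real n\<rfloor> = \<lfloor>t * real (n * N) / real_of_int (int N)\<rfloor>"
    using assms(2) by simp
  also have "\<dots> = \<lfloor>t * real (n * N)\<rfloor> div int N"
    by (rule floor_divide_real_eq_div) simp
  also have "\<dots> = int (m div N)"
    using assms by (simp add: mem_block_iff zdiv_int)
  finally show ?thesis
    using assms(1) by (simp add: mem_block_iff)
qed

lemma sum_indicator_block_eq:
  fixes v :: "nat \<Rightarrow> 'b::real_vector"
  assumes "j < n" "t \<in> block n j"
  shows "(\<Sum>i<n. indicator (block n i) t *\<^sub>R v i) = v j"
proof -
  have "indicator (block n i) t *\<^sub>R v i = (if i = j then v j else 0)" for i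
    using mem_block_unique[of n t j i] assms by (simp add: indicator_def)
  then show ?thesis
    using assms(1) by simp
qed

lemma sum_indicator_block_outside:
  fixes v :: "nat \<Rightarrow> 'b::real_vector"
  assumes "t \<notin> {0..<1}"
  shows "(\<Sum>i<n. indicator (block n i) t *\<^sub>R v i) = 0"
proof -
  have "t \<notin> block n i" if "i < n" for i
    using assms block_subset[OF that] by auto
  then show ?thesis
    by simp
qed

lemma block_lebesgue [simp]: "block n j \<in> sets lebesgue"
  by (simp add: block_def)

lemma block_sets_lebesgue01: "j < n \<Longrightarrow> block n j \<in> sets lebesgue01"
  using block_subset[of j n] by (auto simp: sets_restrict_space_iff)

lemma borel_measurable_indicator_block:
  "(indicator (block n j) :: real \<Rightarrow> real) \<in> borel_measurable lebesgue01"
  by (intro measurable_restrict_space1 borel_measurable_indicator block_lebesgue)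

lemma integrable_indicator_block_scaleR:
  fixes w :: "'b::{banach, second_countable_topology}"
  shows "j < n \<Longrightarrow> integrable lebesgue01 (\<lambda>t. indicator (block n j) t *\<^sub>R w)"
  by (intro integrable_mult_indicator block_sets_lebesgue01
      finite_measure.integrable_const[OF finite_measure_lebesgue01])

lemma integral_indicator_block:
  assumes "j < n"
  shows "(\<integral>t. indicator (block n j) t \<partial>lebesgue01) = 1 / real n"
proof -
  have "(\<integral>t. indicator (block n j) t \<partial>lebesgue01) = measure lebesgue (block n j)"
  proof -
    have "block n j \<subseteq> {0..1}"
      using block_subset[OF assms] by auto
    then show ?thesis
      by (simp add: measure_restrict_space Int_absorb2)
  qed
  also have "\<dots> = (real j + 1) / real n - real j / real n"
    using assms by (simp add: block_def divide_right_mono)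
  also have "\<dots> = 1 / real n"
    by (simp add: diff_divide_distrib[symmetric])
  finally show ?thesis .
qed

definition left_step :: "nat \<Rightarrow> (real \<Rightarrow> 'b::real_vector) \<Rightarrow> real \<Rightarrow> 'b" where
  "left_step n g t = (\<Sum>j<n. indicator (block n j) t *\<^sub>R g (real j / real n))"

lemma eventually_left_step_close:
  fixes g :: "real \<Rightarrow> 'b::real_normed_vector"
  assumes g: "continuous_on {0..1} g" and \<omega>: "\<omega> > 0"
  shows "\<forall>\<^sub>F n in sequentially. \<forall>t\<in>{0..<1}. norm (g t - left_step n g t) < \<omega>"
proof -
  have "uniformly_continuous_on {0..1} g"
    using g by (rule compact_uniformly_continuous) simp
  then obtain d where d: "d > 0"
    "\<And>x x'. x \<in> {0..1} \<Longrightarrow> x' \<in> {0..1} \<Longrightarrow> dist x' x < d \<Longrightarrow> dist (g x') (g x) < \<omega>"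
    using \<omega> unfolding uniformly_continuous_on_def by metis
  obtain n0 :: nat where n0: "1 / d < real n0"
    using reals_Archimedean2 by blast
  have "norm (g t - left_step n g t) < \<omega>" if n: "n0 \<le> n" and t: "t \<in> {0..<1}" for n t
  proof -
    have "0 < 1 / d" "1 / d < real n"
      using d(1) n0 n by auto
    then have n_pos: "0 < n"
      by linarith
    have "1 / real n < d"
      using \<open>1 / d < real n\<close> d(1) n_pos by (simp add: divide_less_eq mult.commute)
    define j where "j = nat \<lfloor>t * real n\<rfloor>"
    have j: "j < n" "t \<in> block n j"
      unfolding j_def using mem_block_floor[OF n_pos t] by auto
    then have "real j / real n \<le> t" "t < real j / real n + 1 / real n"
      by (auto simp: block_def add_divide_distrib)
    then have "dist t (real j / real n) < d"
      using \<open>1 / real n < d\<close> by (simp add: dist_real_def)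
    moreover have "real j / real n \<in> {0..1}"
      using j(1) by simp
    ultimately have "dist (g t) (g (real j / real n)) < \<omega>"
      using d(2) t by simp
    moreover have "left_step n g t = g (real j / real n)"
      unfolding left_step_def by (rule sum_indicator_block_eq[OF j])
    ultimately show ?thesis
      by (simp add: dist_norm)
  qed
  then show ?thesis
    unfolding eventually_sequentially by blast
qed

lemma AE_lebesgue01_neq_1: "AE t in lebesgue01. t \<noteq> 1"
  by (rule AE_I'[of "{1}"]) (auto simp: null_sets_restrict_space)

lemma abs_integral_inner_le_left_step:
  fixes D g :: "real \<Rightarrow> 'b::euclidean_space"
  assumes D: "D \<in> borel_measurable lebesgue01" "AE t in lebesgue01. norm (D t) \<le> K" "0 \<le> K"
    and orth: "\<And>j w. j < n \<Longrightarrow> (\<integral>t. D t \<bullet> (indicator (block n j) t *\<^sub>R w) \<partial>lebesgue01) = 0"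
    and g: "integrable lebesgue01 g"
    and close: "\<forall>t\<in>{0..<1}. norm (g t - left_step n g t) \<le> \<omega>"
  shows "\<bar>\<integral>t. D t \<bullet> g t \<partial>lebesgue01\<bar> \<le> K * \<omega>"
proof -
  have step: "integrable lebesgue01 (left_step n g)"
    unfolding left_step_def by (intro Bochner_Integration.integrable_sum integrable_indicator_block_scaleR) simp
  have "(\<integral>t. D t \<bullet> left_step n g t \<partial>lebesgue01) =
      (\<Sum>j<n. \<integral>t. D t \<bullet> (indicator (block n j) t *\<^sub>R g (real j / real n)) \<partial>lebesgue01)"
    unfolding left_step_def inner_sum_right
    by (intro Bochner_Integration.integral_sum integrable_inner_bounded[OF D(1,2)]
        integrable_indicator_block_scaleR) simp
  also have "\<dots> = 0"
    using orth by simp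
  finally have step_zero: "(\<integral>t. D t \<bullet> left_step n g t \<partial>lebesgue01) = 0" .
  have diff: "integrable lebesgue01 (\<lambda>t. g t - left_step n g t)"
    using g step by simp
  have "(\<integral>t. D t \<bullet> g t \<partial>lebesgue01) = (\<integral>t. D t \<bullet> (g t - left_step n g t) \<partial>lebesgue01)"
    using integral_inner_bounded_add[OF D(1,2) step diff] step_zero by simp
  also have "\<bar>\<dots>\<bar> \<le> K * (\<integral>t. norm (g t - left_step n g t) \<partial>lebesgue01)"
    by (rule abs_integral_inner_le[OF D(1,2) diff])
  also have "\<dots> \<le> K * (\<integral>t. \<omega> \<partial>lebesgue01)"
  proof (intro mult_left_mono integral_mono_AE D(3))
    show "AE t in lebesgue01. norm (g t - left_step n g t) \<le> \<omega>"
    proof (rule AE_mp[OF AE_lebesgue01_neq_1], rule AE_I2, rule impI)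
      fix t assume "t \<in> space lebesgue01" "t \<noteq> 1"
      then show "norm (g t - left_step n g t) \<le> \<omega>"
        using close by auto
    qed
  qed (use diff finite_measure.integrable_const[OF finite_measure_lebesgue01] in auto)
  also have "\<dots> = K * \<omega>"
    by (simp add: measure_restrict_space)
  finally show ?thesis .
qed

definition coord_enum :: "nat \<Rightarrow> 'n::finite" where
  "coord_enum = (SOME e. bij_betw e {..<CARD('n)} UNIV)"

lemma bij_betw_coord_enum: "bij_betw (coord_enum :: nat \<Rightarrow> 'n::finite) {..<CARD('n)} UNIV"
proof -
  obtain e :: "nat \<Rightarrow> 'n" where "bij_betw e {..<CARD('n)} UNIV"
    using ex_bij_betw_nat_finite[of "UNIV :: 'n set"] by (auto simp: lessThan_atLeast0)
  then show ?thesis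
    unfolding coord_enum_def by (rule someI[where P = "\<lambda>e. bij_betw e {..<CARD('n)} UNIV"])
qed

definition block_integral :: "nat \<Rightarrow> (real \<Rightarrow> real ^ 'n) \<Rightarrow> nat \<Rightarrow> real ^ 'n" where
  "block_integral n f j = (\<integral>t. indicator (block n j) t *\<^sub>R f t \<partial>lebesgue01)"

text \<open>Subinterval m of the partition into n * N pieces is the (m mod N)-th part of block m div N.\<close>

definition stair_value :: "nat \<Rightarrow> (real \<Rightarrow> real ^ 'n::finite) \<Rightarrow> nat \<Rightarrow> real ^ 'n" where
  "stair_value n f m =
    (real (n * CARD('n)) * block_integral n f (m div CARD('n)) $ coord_enum (m mod CARD('n)))
      *\<^sub>R axis (coord_enum (m mod CARD('n))) 1"

definition stair :: "nat \<Rightarrow> (real \<Rightarrow> real ^ 'n::finite) \<Rightarrow> real \<Rightarrow> real ^ 'n" where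
  "stair n f t = (\<Sum>m < n * CARD('n). indicator (block (n * CARD('n)) m) t *\<^sub>R stair_value n f m)"

lemma borel_measurable_stair: "stair n f \<in> borel_measurable lebesgue01"
  unfolding stair_def
  by (intro borel_measurable_sum borel_measurable_scaleR borel_measurable_indicator_block
      borel_measurable_const)

lemma stair_in_F_N:
  fixes f :: "real \<Rightarrow> real ^ 'n::finite"
  assumes "0 < n"
  shows "stair n f \<in> F_N 0 1"
proof -
  define P where "P = n * CARD('n)"
  have P: "0 < P"
    using assms by (simp add: P_def)
  define T where "T l = real l / real P" for l
  define i where "i l = (coord_enum ((l - 1) mod CARD('n)) :: 'n)" for l
  define c where "c l = real P * block_integral n f ((l - 1) div CARD('n)) $ i l" for l
  have "stair n f s = c l *\<^sub>R axis (i l) 1" if l: "l \<in> {1..P}" and s: "s \<in> {T (l - 1)<..<T l}" for l s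
  proof -
    have "real (l - 1) < s * real P" "s * real P < real (l - 1) + 1"
      using s l P by (auto simp: T_def field_simps of_nat_diff)
    then have "s \<in> block P (l - 1)"
      using P by (simp add: mem_block_iff floor_eq_iff)
    moreover have "l - 1 < P"
      using l by auto
    ultimately show ?thesis
      unfolding stair_def P_def[symmetric]
      by (subst sum_indicator_block_eq) (auto simp: stair_value_def c_def i_def P_def)
  qed
  moreover have "\<forall>l<P. T l < T (Suc l)"
    using P by (simp add: T_def divide_strict_right_mono)
  moreover have "1 \<le> P" "T 0 = 0" "T P = 1"
    using P by (auto simp: T_def)
  ultimately show ?thesis
    unfolding F_N_def by blast
qed

lemma norm_block_integral_le:
  fixes f :: "real \<Rightarrow> real ^ 'n"
  assumes f: "integrable lebesgue01 f" "AE t in lebesgue01. norm (f t) \<le> M" and j: "j < n"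
  shows "norm (block_integral n f j) \<le> M / real n"
proof -
  have "norm (block_integral n f j) \<le> (\<integral>t. norm (indicator (block n j) t *\<^sub>R f t) \<partial>lebesgue01)"
    unfolding block_integral_def by (rule integral_norm_bound)
  also have "\<dots> \<le> (\<integral>t. M * indicator (block n j) t \<partial>lebesgue01)"
  proof (rule integral_mono_AE)
    show "integrable lebesgue01 (\<lambda>t. norm (indicator (block n j) t *\<^sub>R f t))"
      using f(1) j by (intro integrable_norm integrable_mult_indicator block_sets_lebesgue01)
    show "integrable lebesgue01 (\<lambda>t. M * indicator (block n j) t)"
      using integrable_indicator_block_scaleR[OF j, of "1::real"] by (intro integrable_mult_right) simp
    show "AE t in lebesgue01. norm (indicator (block n j) t *\<^sub>R f t) \<le> M * indicator (block n j) t"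
      using f(2) by eventually_elim (auto simp: indicator_def)
  qed
  also have "\<dots> = M / real n"
    using integral_indicator_block[OF j] by simp
  finally show ?thesis .
qed

lemma norm_stair_le:
  fixes f :: "real \<Rightarrow> real ^ 'n::finite"
  assumes f: "integrable lebesgue01 f" "AE t in lebesgue01. norm (f t) \<le> M" and M: "0 \<le> M"
  shows "norm (stair n f t) \<le> real CARD('n) * M"
proof (cases "0 < n \<and> t \<in> {0..<1}")
  case True
  define P where "P = n * CARD('n)"
  define m where "m = nat \<lfloor>t * real P\<rfloor>"
  have P: "0 < P"
    using True by (simp add: P_def)
  have m: "m < P" "t \<in> block P m"
    unfolding m_def using mem_block_floor[OF P] True by auto
  have j: "m div CARD('n) < n"
    using m(1) by (simp add: P_def div_less_iff_less_mult)
  have "norm (stair n f t) = norm (stair_value n f m)"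
    unfolding stair_def P_def[symmetric] by (simp add: sum_indicator_block_eq[OF m])
  also have "\<dots> = real P * \<bar>block_integral n f (m div CARD('n)) $ coord_enum (m mod CARD('n))\<bar>"
    by (simp add: stair_value_def P_def abs_mult)
  also have "\<dots> \<le> real P * (M / real n)"
    using order.trans[OF component_le_norm_cart norm_block_integral_le[OF f j]]
    by (intro mult_left_mono) auto
  also have "\<dots> = real CARD('n) * M"
    using True by (simp add: P_def)
  finally show ?thesis .
next
  case False
  have "stair n f t = 0"
  proof (cases "n = 0")
    case False
    then have "t \<notin> {0..<1}"
      using \<open>\<not> (0 < n \<and> t \<in> {0..<1})\<close> by simp
    then show ?thesis
      unfolding stair_def by (rule sum_indicator_block_outside)
  qed (simp add: stair_def)
  then show ?thesis
    using M by simp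
qed

lemma integral_inner_indicator_block:
  fixes f :: "real \<Rightarrow> real ^ 'n"
  assumes "integrable lebesgue01 f" "j < n"
  shows "(\<integral>t. f t \<bullet> (indicator (block n j) t *\<^sub>R w) \<partial>lebesgue01) = block_integral n f j \<bullet> w"
proof -
  have "(\<lambda>t. f t \<bullet> (indicator (block n j) t *\<^sub>R w)) = (\<lambda>t. (indicator (block n j) t *\<^sub>R f t) \<bullet> w)"
    by simp
  moreover have "integrable lebesgue01 (\<lambda>t. indicator (block n j) t *\<^sub>R f t)"
    using assms by (intro integrable_mult_indicator block_sets_lebesgue01)
  ultimately show ?thesis
    unfolding block_integral_def by (simp only: integral_inner_left)
qed

lemma integral_stair_inner_indicator_block:
  fixes f :: "real \<Rightarrow> real ^ 'n::finite"
  assumes j: "j < n"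
  shows "(\<integral>t. stair n f t \<bullet> (indicator (block n j) t *\<^sub>R w) \<partial>lebesgue01) = block_integral n f j \<bullet> w"
proof -
  define N where "N = CARD('n)"
  define v where "v m = stair_value n f m \<bullet> w" for m
  have N: "0 < N" and n: "0 < n"
    using j by (auto simp: N_def)
  have pointwise: "stair n f t \<bullet> (indicator (block n j) t *\<^sub>R w) =
      (\<Sum>m < n * N. indicator (block (n * N) m) t * (if m div N = j then v m else 0))" for t
    unfolding stair_def N_def[symmetric] inner_sum_left
  proof (intro sum.cong refl)
    fix m
    show "(indicator (block (n * N) m) t *\<^sub>R stair_value n f m) \<bullet> (indicator (block n j) t *\<^sub>R w) =
        indicator (block (n * N) m) t * (if m div N = j then v m else 0)"
      using mem_block_mult_iff[OF n N, of t m j] by (cases "t \<in> block (n * N) m") (auto simp: v_def)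
  qed
  have "(\<integral>t. stair n f t \<bullet> (indicator (block n j) t *\<^sub>R w) \<partial>lebesgue01) =
      (\<Sum>m < n * N. (if m div N = j then v m else 0) / real (n * N))"
    unfolding pointwise
    using integrable_indicator_block_scaleR[of _ "n * N" "1::real"] integral_indicator_block[of _ "n * N"]
    by (subst Bochner_Integration.integral_sum) auto
  also have "\<dots> = (\<Sum>i<n. \<Sum>r<N. (if (r + i * N) div N = j then v (r + i * N) else 0) / real (n * N))"
    by (simp only: sum_mult_product)
  also have "\<dots> = (\<Sum>i<n. if i = j then (\<Sum>r<N. v (r + i * N) / real (n * N)) else 0)"
    by (intro sum.cong refl) (auto intro!: sum.neutral sum.cong)
  also have "\<dots> = (\<Sum>r<N. v (r + j * N) / real (n * N))"
    using j by simp
  also have "\<dots> = (\<Sum>r<N. block_integral n f j $ coord_enum r * w $ coord_enum r)"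
    using n N by (intro sum.cong refl) (simp add: v_def stair_value_def inner_axis' N_def)
  also have "\<dots> = (\<Sum>i\<in>UNIV. block_integral n f j $ i * w $ i)"
    using bij_betw_coord_enum unfolding N_def by (rule sum.reindex_bij_betw)
  also have "\<dots> = block_integral n f j \<bullet> w"
    by (simp add: inner_vec_def)
  finally show ?thesis .
qed

lemma AE_norm_stair_diff_le:
  fixes f :: "real \<Rightarrow> real ^ 'n::finite"
  assumes f: "integrable lebesgue01 f" "AE t in lebesgue01. norm (f t) \<le> M" and M: "0 \<le> M"
  shows "AE t in lebesgue01. norm (stair n f t - f t) \<le> real CARD('n) * M + M"
  using f(2)
proof eventually_elim
  case (elim t)
  then show ?case
    using norm_triangle_ineq4[of "stair n f t" "f t"] norm_stair_le[OF f M, of n t] by simp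
qed

lemma integral_stair_diff_inner_indicator_block:
  fixes f :: "real \<Rightarrow> real ^ 'n::finite"
  assumes f: "integrable lebesgue01 f" "AE t in lebesgue01. norm (f t) \<le> M" "0 \<le> M" and j: "j < n"
  shows "(\<integral>t. (stair n f t - f t) \<bullet> (indicator (block n j) t *\<^sub>R w) \<partial>lebesgue01) = 0"
proof -
  have "AE t in lebesgue01. norm (stair n f t) \<le> real CARD('n) * M"
    using norm_stair_le[OF f] by simp
  then have "integrable lebesgue01 (\<lambda>t. stair n f t \<bullet> (indicator (block n j) t *\<^sub>R w))"
    by (intro integrable_inner_bounded borel_measurable_stair integrable_indicator_block_scaleR j)
  moreover have "integrable lebesgue01 (\<lambda>t. f t \<bullet> (indicator (block n j) t *\<^sub>R w))"
    using f borel_measurable_integrable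
    by (intro integrable_inner_bounded integrable_indicator_block_scaleR j) auto
  ultimately have "(\<integral>t. (stair n f t - f t) \<bullet> (indicator (block n j) t *\<^sub>R w) \<partial>lebesgue01) =
      (\<integral>t. stair n f t \<bullet> (indicator (block n j) t *\<^sub>R w) \<partial>lebesgue01) -
      (\<integral>t. f t \<bullet> (indicator (block n j) t *\<^sub>R w) \<partial>lebesgue01)"
    unfolding inner_diff_left by (rule Bochner_Integration.integral_diff)
  then show ?thesis
    by (simp only: integral_stair_inner_indicator_block[OF j] integral_inner_indicator_block[OF f(1) j]
        diff_self)
qed

lemma tendsto_integral_stair_diff_continuous:
  fixes f g :: "real \<Rightarrow> real ^ 'n::finite"
  assumes f: "integrable lebesgue01 f" "AE t in lebesgue01. norm (f t) \<le> M" "0 \<le> M"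
    and g: "continuous_on {0..1} g"
  shows "(\<lambda>n. \<integral>t. (stair n f t - f t) \<bullet> g t \<partial>lebesgue01) \<longlonglongrightarrow> 0"
  unfolding tendsto_iff
proof (intro allI impI)
  fix \<epsilon> :: real assume \<epsilon>: "0 < \<epsilon>"
  define K where "K = real CARD('n) * M + M"
  have K: "0 \<le> K"
    using f(3) by (simp add: K_def)
  define \<omega> where "\<omega> = \<epsilon> / (2 * (K + 1))"
  have \<omega>: "0 < \<omega>"
    using \<epsilon> K by (simp add: \<omega>_def)
  have "K * \<omega> \<le> (K + 1) * \<omega>"
    using \<omega> by simp
  also have "\<dots> = \<epsilon> / 2"
    using K by (simp add: \<omega>_def field_simps add_nonneg_pos)
  also have "\<dots> < \<epsilon>"
    using \<epsilon> by simp
  finally have K\<omega>: "K * \<omega> < \<epsilon>" .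
  have D: "(\<lambda>t. stair n f t - f t) \<in> borel_measurable lebesgue01" for n
    using borel_measurable_integrable[OF f(1)] by (intro borel_measurable_diff borel_measurable_stair)
  show "\<forall>\<^sub>F n in sequentially. dist (\<integral>t. (stair n f t - f t) \<bullet> g t \<partial>lebesgue01) 0 < \<epsilon>"
    using eventually_left_step_close[OF g \<omega>]
  proof eventually_elim
    case (elim n)
    have "\<bar>\<integral>t. (stair n f t - f t) \<bullet> g t \<partial>lebesgue01\<bar> \<le> K * \<omega>"
      using D AE_norm_stair_diff_le[OF f] K integral_stair_diff_inner_indicator_block[OF f]
        continuous_imp_integrable_real[OF g] elim
      unfolding K_def by (intro abs_integral_inner_le_left_step[where n = n]) (auto intro: less_imp_le)
    then show ?case
      using K\<omega> by simp
  qed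
qed

lemma tendsto_integral_stair_inner:
  fixes f h :: "real \<Rightarrow> real ^ 'n::finite"
  assumes f: "integrable lebesgue01 f" "AE t in lebesgue01. norm (f t) \<le> M" "0 \<le> M"
    and h: "integrable lebesgue01 h"
  shows "(\<lambda>n. \<integral>t. stair n f t \<bullet> h t \<partial>lebesgue01) \<longlonglongrightarrow> (\<integral>t. f t \<bullet> h t \<partial>lebesgue01)"
proof -
  have D: "(\<lambda>t. stair n f t - f t) \<in> borel_measurable lebesgue01" for n
    using borel_measurable_integrable[OF f(1)] by (intro borel_measurable_diff borel_measurable_stair)
  have "(\<lambda>n. \<integral>t. (stair n f t - f t) \<bullet> h t \<partial>lebesgue01) \<longlonglongrightarrow> 0"
    using D AE_norm_stair_diff_le[OF f] tendsto_integral_stair_diff_continuous[OF f] h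
    by (rule tendsto_integral_inner_zero_of_continuous)
  moreover have "(\<integral>t. (stair n f t - f t) \<bullet> h t \<partial>lebesgue01) =
      (\<integral>t. stair n f t \<bullet> h t \<partial>lebesgue01) - (\<integral>t. f t \<bullet> h t \<partial>lebesgue01)" for n
  proof -
    have "AE t in lebesgue01. norm (stair n f t) \<le> real CARD('n) * M"
      using norm_stair_le[OF f] by simp
    then have "integrable lebesgue01 (\<lambda>t. stair n f t \<bullet> h t)"
      by (intro integrable_inner_bounded borel_measurable_stair h)
    moreover have "integrable lebesgue01 (\<lambda>t. f t \<bullet> h t)"
      using f borel_measurable_integrable by (intro integrable_inner_bounded h) auto
    ultimately show ?thesis
      by (simp add: inner_diff_left)
  qed
  ultimately show ?thesis
    by (simp add: LIM_zero_iff)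
qed

lemma Linf_boundE:
  fixes f :: "real \<Rightarrow> real ^ 'n"
  assumes "f \<in> Linf"
  obtains M where "0 \<le> M" "Linf_norm f = ereal M"
    "integrable lebesgue01 f" "AE t in lebesgue01. norm (f t) \<le> M"
proof -
  have f: "f \<in> borel_measurable lebesgue01" and finite: "Linf_norm f < \<infinity>"
    using assms by (auto simp: Linf_def)
  have "emeasure lebesgue01 (space lebesgue01) \<noteq> 0"
    by (simp add: emeasure_restrict_space)
  then have "0 \<le> Linf_norm f"
    using esssup_mono[of "\<lambda>t. 0" lebesgue01 "\<lambda>t. ereal (norm (f t))"]
    by (simp add: Linf_norm_def esssup_const zero_ereal_def)
  then obtain M where M: "0 \<le> M" "Linf_norm f = ereal M"
    using finite by (cases "Linf_norm f") auto
  have bound: "AE t in lebesgue01. norm (f t) \<le> M"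
    using esssup_AE[of "\<lambda>t. ereal (norm (f t))" lebesgue01] M(2) by (simp add: Linf_norm_def)
  have "integrable lebesgue01 f"
    by (rule finite_measure.integrable_const_bound[OF finite_measure_lebesgue01 bound f])
  with M bound that show ?thesis
    by blast
qed

lemma Linf_norm_le:
  assumes "g \<in> borel_measurable lebesgue01" "AE t in lebesgue01. norm (g t) \<le> B"
  shows "Linf_norm g \<le> ereal B"
  unfolding Linf_norm_def using assms by (intro esssup_I) auto

theorem propositionA1:
  "\<exists>C>0. \<forall>f::real \<Rightarrow> real ^ 'n. f \<in> Linf \<longrightarrow>
     (\<exists>fk::nat \<Rightarrow> real \<Rightarrow> real ^ 'n.
        (\<forall>k. fk k \<in> F_N 0 1) \<and>
        (\<forall>h\<in>L1. (\<lambda>k. integral\<^sup>L (lebesgue_on {0..1}) (\<lambda>t. fk k t \<bullet> h t))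
                    \<longlonglongrightarrow> integral\<^sup>L (lebesgue_on {0..1}) (\<lambda>t. f t \<bullet> h t)) \<and>
        (\<forall>k. Linf_norm (fk k) \<le> ereal C * Linf_norm f))"
proof (rule exI[of _ "real CARD('n)"], intro conjI allI impI)
  show "0 < real CARD('n)"
    by simp
  fix f :: "real \<Rightarrow> real ^ 'n" assume "f \<in> Linf"
  then obtain M where M: "0 \<le> M" "Linf_norm f = ereal M"
      and f: "integrable lebesgue01 f" "AE t in lebesgue01. norm (f t) \<le> M"
    by (rule Linf_boundE)
  show "\<exists>fk. (\<forall>k. fk k \<in> F_N 0 1) \<and>
      (\<forall>h\<in>L1. (\<lambda>k. \<integral>t. fk k t \<bullet> h t \<partial>lebesgue01) \<longlonglongrightarrow> (\<integral>t. f t \<bullet> h t \<partial>lebesgue01)) \<and>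
      (\<forall>k. Linf_norm (fk k) \<le> ereal (real CARD('n)) * Linf_norm f)"
  proof (intro exI conjI allI ballI)
    show "stair (Suc k) f \<in> F_N 0 1" for k
      by (rule stair_in_F_N) simp
    show "(\<lambda>k. \<integral>t. stair (Suc k) f t \<bullet> h t \<partial>lebesgue01) \<longlonglongrightarrow> (\<integral>t. f t \<bullet> h t \<partial>lebesgue01)"
      if "h \<in> L1" for h
      using that LIMSEQ_Suc[OF tendsto_integral_stair_inner[OF f M(1)]] by (simp add: L1_def)
    show "Linf_norm (stair (Suc k) f) \<le> ereal (real CARD('n)) * Linf_norm f" for k
      using Linf_norm_le[OF borel_measurable_stair AE_I2[OF norm_stair_le[OF f M(1)]]] M(2)
      by simp
  qed
qed

end
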